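(* Let $n\ge 1$ and consider any sequence of legal moves starting from $\{F_1^n\}$ that uses only splitting moves and $C_1$ moves. Then in every game state reached, if $i<j$ are indices such that $F_i$ and $F_j$ both occur in the state and no $F_l$ with $i<l<j$ occurs, then $j-i\le 3$.
   Context: Fibonacci numbers are indexed by $F_1=1$, $F_2=2$, $F_{i+1}=F_i+F_{i-1}$. A game state is a finite multiset of Fibonacci numbers (tracked by index); $\{F_1^n\}$ denotes $n$ copies of $F_1$. The moves considered are: $C_1$: replace $F_1,F_1$ by $F_2$; $S_2$: replace $F_2,F_2$ by $F_1,F_3$; for $i\ge 3$, $S_i$: replace $F_i,F_i$ by $F_{i-2},F_{i+1}$ (the "splitting moves"); each requires the two replaced elements to be present in the state. *)

theory Defs
  imports Main "HOL-Library.Multiset"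
begin

text \<open>A game state is a multiset of Fibonacci indices (index i stands for F_i,
with F_1 = 1, F_2 = 2). The allowed moves are C_1 and the splitting moves S_i.\<close>

definition move_C1 :: "nat multiset \<Rightarrow> nat multiset \<Rightarrow> bool" where
  "move_C1 M M' \<longleftrightarrow> {#1, 1#} \<subseteq># M \<and> M' = M - {#1, 1#} + {#2#}"

definition move_S :: "nat \<Rightarrow> nat multiset \<Rightarrow> nat multiset \<Rightarrow> bool" where
  "move_S i M M' \<longleftrightarrow>
     (i = 2 \<and> {#2, 2#} \<subseteq># M \<and> M' = M - {#2, 2#} + {#1, 3#}) \<or>
     (i \<ge> 3 \<and> {#i, i#} \<subseteq># M \<and> M' = M - {#i, i#} + {#i - 2, i + 1#})"

definition split_or_C1_move :: "nat multiset \<Rightarrow> nat multiset \<Rightarrow> bool" where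
  "split_or_C1_move M M' \<longleftrightarrow> move_C1 M M' \<or> (\<exists>i. move_S i M M')"

end

theory Submission
  imports Defs
begin

text \<open>
  The invariant is that consecutive indices occurring in the state differ by at most 3.
  Equivalently, every window \<open>(c, c + 3]\<close> between two occurring indices meets the state,
  which makes the effect of a single move local. A move replacing \<open>F\<^sub>i, F\<^sub>i\<close> by
  \<open>F\<^sub>a, F\<^sub>b\<close> only inserts indices within distance 3 of the occurring index \<open>i\<close>, and
  when it deletes \<open>i\<close> the gap is bridged by \<open>a < i < b \<le> a + 3\<close>. For \<open>C\<^sub>1\<close> the
  bridge is \<open>0 < 1 < 2\<close> if 0 occurs, and otherwise the deleted 1 was the least index.
\<close>

definition gaps_at_most :: "nat \<Rightarrow> nat set \<Rightarrow> bool" where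
  "gaps_at_most k S \<longleftrightarrow>
     (\<forall>i j. i < j \<and> i \<in> S \<and> j \<in> S \<and> (\<forall>l. i < l \<and> l < j \<longrightarrow> l \<notin> S) \<longrightarrow> j - i \<le> k)"

lemma gaps_at_most_hits_window:
  assumes g: "gaps_at_most k S" and "s \<in> S" "y \<in> S" "s \<le> c" "c < y"
  shows "\<exists>z\<in>S. c < z \<and> z \<le> c + k"
proof -
  define p where "p = Max {z \<in> S. z \<le> c}"
  define w where "w = (LEAST z. z \<in> S \<and> c < z)"
  have fin: "finite {z \<in> S. z \<le> c}" by (rule finite_subset[of _ "{..c}"]) auto
  have "p \<in> {z \<in> S. z \<le> c}"
    unfolding p_def using fin \<open>s \<in> S\<close> \<open>s \<le> c\<close> by (intro Max_in) auto
  then have p: "p \<in> S" "p \<le> c" by auto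
  have w: "w \<in> S" "c < w"
    using LeastI[of "\<lambda>z. z \<in> S \<and> c < z" y] \<open>y \<in> S\<close> \<open>c < y\<close> unfolding w_def by auto
  have "l \<notin> S" if "p < l" "l < w" for l
  proof
    assume "l \<in> S"
    show False
    proof (cases "l \<le> c")
      case True
      then have "l \<le> p" unfolding p_def using fin \<open>l \<in> S\<close> by (intro Max_ge) auto
      with \<open>p < l\<close> show False by simp
    next
      case False
      then show False using Least_le[of "\<lambda>z. z \<in> S \<and> c < z" l] \<open>l \<in> S\<close> \<open>l < w\<close>
        unfolding w_def by auto
    qed
  qed
  with g p w have "w - p \<le> k" unfolding gaps_at_most_def by fastforce
  with p w show ?thesis by auto
qed

lemma gaps_at_mostI:
  assumes "\<And>x y. x \<in> S \<Longrightarrow> y \<in> S \<Longrightarrow> x < y \<Longrightarrow> \<exists>z\<in>S. x < z \<and> z \<le> x + k"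
  shows "gaps_at_most k S"
  unfolding gaps_at_most_def
proof (intro allI impI)
  fix x y assume adj: "x < y \<and> x \<in> S \<and> y \<in> S \<and> (\<forall>l. x < l \<and> l < y \<longrightarrow> l \<notin> S)"
  then obtain z where "z \<in> S" "x < z" "z \<le> x + k" using assms by blast
  with adj have "y \<le> z" by (meson not_less)
  with \<open>z \<le> x + k\<close> show "y - x \<le> k" by linarith
qed

lemma gaps_at_most_insert:
  assumes g: "gaps_at_most k S" and "s \<in> S" "c \<le> s + k" "s \<le> c + k"
  shows "gaps_at_most k (insert c S)"
proof (rule gaps_at_mostI)
  fix x y assume x: "x \<in> insert c S" and y: "y \<in> insert c S" and "x < y"
  consider "x \<in> S" "y \<in> S" | "x \<in> S" "y = c" | "x = c" "y \<in> S"
    using x y \<open>x < y\<close> by blast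
  then have "\<exists>z\<in>S \<union> {c}. x < z \<and> z \<le> x + k"
  proof cases
    case 1
    then show ?thesis using gaps_at_most_hits_window[OF g, of x y x] \<open>x < y\<close> by auto
  next
    case 2
    show ?thesis
    proof (cases "c \<le> x + k")
      case True
      then show ?thesis using 2 \<open>x < y\<close> by auto
    next
      case False
      with \<open>c \<le> s + k\<close> have "x < s" by linarith
      then show ?thesis using gaps_at_most_hits_window[OF g, of x s x] 2 \<open>s \<in> S\<close> by auto
    qed
  next
    case 3
    show ?thesis
    proof (cases "s \<le> c")
      case True
      then show ?thesis using gaps_at_most_hits_window[OF g \<open>s \<in> S\<close>, of y c] 3 \<open>x < y\<close> by auto
    next
      case False
      then show ?thesis using 3 \<open>s \<in> S\<close> \<open>s \<le> c + k\<close> by (intro bexI[of _ s]) auto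
    qed
  qed
  then show "\<exists>z\<in>insert c S. x < z \<and> z \<le> x + k" by simp
qed

lemma gaps_at_most_Diff_bridged:
  assumes g: "gaps_at_most k S" and "a \<in> S" "b \<in> S" "a < i" "i < b" "b \<le> a + k"
  shows "gaps_at_most k (S - {i})"
proof (rule gaps_at_mostI)
  fix x y assume x: "x \<in> S - {i}" and y: "y \<in> S - {i}" and "x < y"
  then obtain z where z: "z \<in> S" "x < z" "z \<le> x + k"
    using gaps_at_most_hits_window[OF g, of x y x] by auto
  show "\<exists>z\<in>S - {i}. x < z \<and> z \<le> x + k"
  proof (cases "z = i")
    case False
    then show ?thesis using z by auto
  next
    case True
    show ?thesis
    proof (cases "x < a")
      case True
      then show ?thesis using z \<open>z = i\<close> \<open>a \<in> S\<close> \<open>a < i\<close> by auto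
    next
      case False
      then have "b \<le> x + k" using \<open>b \<le> a + k\<close> by linarith
      then show ?thesis using z \<open>z = i\<close> \<open>b \<in> S\<close> \<open>i < b\<close> by (intro bexI[of _ b]) auto
    qed
  qed
qed

lemma gaps_at_most_Diff_least:
  assumes "gaps_at_most k S" and "\<forall>x\<in>S. i \<le> x"
  shows "gaps_at_most k (S - {i})"
proof (rule gaps_at_mostI)
  fix x y assume "x \<in> S - {i}" "y \<in> S - {i}" "x < y"
  then obtain z where "z \<in> S" "x < z" "z \<le> x + k"
    using gaps_at_most_hits_window[OF assms(1), of x y x] by auto
  moreover have "i < z" using \<open>x \<in> S - {i}\<close> \<open>x < z\<close> assms(2) by fastforce
  ultimately show "\<exists>z\<in>S - {i}. x < z \<and> z \<le> x + k" by auto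
qed

lemma set_mset_remove_pair_add:
  assumes "{#i, i#} \<subseteq># M"
  shows "set_mset (M - {#i, i#} + N) = set_mset M \<union> set_mset N
       \<or> set_mset (M - {#i, i#} + N) = set_mset M \<union> set_mset N - {i}"
proof -
  have "i \<in># M" using assms by (meson insert_subset_eq_iff)
  have same: "x \<in># M - {#i, i#} + N \<longleftrightarrow> x \<in> set_mset M \<union> set_mset N" if "x \<noteq> i" for x
    using that by (simp add: in_diff_count)
  show ?thesis
  proof (cases "i \<in># M - {#i, i#} + N")
    case True
    have "set_mset (M - {#i, i#} + N) = set_mset M \<union> set_mset N"
      by (intro set_eqI) (metis True Un_iff \<open>i \<in># M\<close> same)
    then show ?thesis ..
  next
    case False
    have "set_mset (M - {#i, i#} + N) = set_mset M \<union> set_mset N - {i}"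
      by (intro set_eqI) (metis False Diff_iff singletonD singletonI same)
    then show ?thesis ..
  qed
qed

lemma gaps_at_most_remove_pair_add:
  assumes "{#i, i#} \<subseteq># M"
    and "gaps_at_most k (set_mset M \<union> set_mset N)"
    and "gaps_at_most k (set_mset M \<union> set_mset N - {i})"
  shows "gaps_at_most k (set_mset (M - {#i, i#} + N))"
  using set_mset_remove_pair_add[OF assms(1), of N] assms(2,3) by metis

lemma gaps_at_most_split_move:
  assumes g: "gaps_at_most k (set_mset M)" and sub: "{#i, i#} \<subseteq># M"
    and "a < i" "i < b" "b \<le> a + k"
  shows "gaps_at_most k (set_mset (M - {#i, i#} + {#a, b#}))"
proof (rule gaps_at_most_remove_pair_add[OF sub])
  have "i \<in># M" using sub by (meson insert_subset_eq_iff)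
  have "gaps_at_most k (insert b (set_mset M))"
    using gaps_at_most_insert[OF g \<open>i \<in># M\<close>] assms(3-5) by auto
  then have "gaps_at_most k (insert a (insert b (set_mset M)))"
    using gaps_at_most_insert[of k _ i a] \<open>i \<in># M\<close> assms(3-5) by auto
  moreover have "set_mset M \<union> set_mset {#a, b#} = insert a (insert b (set_mset M))" by auto
  ultimately show T: "gaps_at_most k (set_mset M \<union> set_mset {#a, b#})" by simp
  show "gaps_at_most k (set_mset M \<union> set_mset {#a, b#} - {i})"
    using gaps_at_most_Diff_bridged[OF T, of a b i] assms(3-5) by auto
qed

lemma gaps_at_most_C1_move:
  assumes g: "gaps_at_most k (set_mset M)" and sub: "{#1, 1#} \<subseteq># M" and "2 \<le> k"
  shows "gaps_at_most k (set_mset (M - {#1, 1#} + {#2#}))"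
proof (rule gaps_at_most_remove_pair_add[OF sub])
  have "1 \<in># M" using sub by (meson insert_subset_eq_iff)
  then have "gaps_at_most k (insert 2 (set_mset M))"
    using gaps_at_most_insert[OF g] \<open>2 \<le> k\<close> by auto
  then show T: "gaps_at_most k (set_mset M \<union> set_mset {#2#})" by simp
  show "gaps_at_most k (set_mset M \<union> set_mset {#2#} - {1})"
  proof (cases "0 \<in># M")
    case True
    then show ?thesis using gaps_at_most_Diff_bridged[OF T, of 0 2 1] \<open>2 \<le> k\<close> by auto
  next
    case False
    then have "\<forall>x\<in>set_mset M \<union> set_mset {#2#}. 1 \<le> x" by (auto simp: Suc_le_eq intro!: gr0I)
    then show ?thesis by (rule gaps_at_most_Diff_least[OF T])
  qed
qed

lemma gaps_at_most_move:
  assumes "split_or_C1_move M M'" and g: "gaps_at_most k (set_mset M)" and "3 \<le> k"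
  shows "gaps_at_most k (set_mset M')"
  using assms(1) unfolding split_or_C1_move_def move_C1_def move_S_def
proof (elim disjE exE conjE)
  show "{#1, 1#} \<subseteq># M \<Longrightarrow> M' = M - {#1, 1#} + {#2#} \<Longrightarrow> ?thesis"
    using gaps_at_most_C1_move[OF g] \<open>3 \<le> k\<close> by simp
  show "{#2, 2#} \<subseteq># M \<Longrightarrow> M' = M - {#2, 2#} + {#1, 3#} \<Longrightarrow> ?thesis"
    using gaps_at_most_split_move[OF g, of 2 1 3] \<open>3 \<le> k\<close> by simp
  fix i assume "3 \<le> i" "{#i, i#} \<subseteq># M" "M' = M - {#i, i#} + {#i - 2, i + 1#}"
  then show ?thesis using gaps_at_most_split_move[OF g, of i "i - 2" "i + 1"] \<open>3 \<le> k\<close> by simp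
qed

lemma gaps_at_most_reachable:
  assumes "split_or_C1_move\<^sup>*\<^sup>* M0 M" and "gaps_at_most k (set_mset M0)" and "3 \<le> k"
  shows "gaps_at_most k (set_mset M)"
  using assms by (induction rule: rtranclp_induct) (auto intro: gaps_at_most_move)

theorem mainTheorem11:
  fixes n :: nat and M :: "nat multiset"
  assumes "n \<ge> 1"
    and "split_or_C1_move\<^sup>*\<^sup>* (replicate_mset n 1) M"
  shows "\<forall>i j. i < j \<and> i \<in># M \<and> j \<in># M \<and> (\<forall>l. i < l \<and> l < j \<longrightarrow> l \<notin># M)
           \<longrightarrow> j - i \<le> 3"
proof -
  have "gaps_at_most 3 (set_mset (replicate_mset n 1))"
    unfolding gaps_at_most_def by auto
  with assms(2) have "gaps_at_most 3 (set_mset M)"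
    by (rule gaps_at_most_reachable) simp
  then show ?thesis unfolding gaps_at_most_def by blast
qed

end
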